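(* Let $(W,S)$ be a Coxeter system with $S=D$ finite and $W$ infinite. For each $X\subsetneq D$ write $\varepsilon(X)/W_X(t)$ as an irreducible fraction of polynomials with monic denominator. Then the least common multiple of all these denominators (over all $X\subsetneq D$, with $W_X$ finite or infinite) equals $\mathrm{Virg}(D)$, the monic least common multiple of the polynomials $W_X(t)$ over $X\subsetneq D$ with $W_X$ finite.
   Context: $\varepsilon(X)=(-1)^{|X|}$. For $X\subseteq S$, $W_X$ is the special subgroup generated by $X$ and $W_X(t)=\sum_{g\in W_X}t^{l(g)}$ its Poincaré series (a rational function; a polynomial, monic with constant term $1$, when $W_X$ is finite). The empty set gives $W_\emptyset(t)=1$. *)

theory Defs
  imports "HOL-Algebra.Group" "HOL-Computational_Algebra.Polynomial_FPS"
    "HOL-Computational_Algebra.Polynomial_Factorial" "HOL-Computational_Algebra.Field_as_Ring"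
begin

definition wprod :: "('g, 'b) monoid_scheme \<Rightarrow> 'g list \<Rightarrow> 'g" where
  "wprod G ws = foldr (\<lambda>x y. x \<otimes>\<^bsub>G\<^esub> y) ws \<one>\<^bsub>G\<^esub>"

definition elem_ord :: "('g, 'b) monoid_scheme \<Rightarrow> 'g \<Rightarrow> nat" where
  "elem_ord G x = (if \<exists>n>0. x [^]\<^bsub>G\<^esub> (n::nat) = \<one>\<^bsub>G\<^esub>
     then (LEAST n. n > 0 \<and> x [^]\<^bsub>G\<^esub> (n::nat) = \<one>\<^bsub>G\<^esub>) else 0)"

text \<open>The congruence on words over S generated by the Coxeter relations
  (s s')^m(s,s') = 1, where m(s,s') is the order of s s' in G (relations only
  for finite m; m(s,s) = 1 gives s s = 1).\<close>
inductive cox_cong :: "('g, 'b) monoid_scheme \<Rightarrow> 'g set \<Rightarrow> 'g list \<Rightarrow> 'g list \<Rightarrow> bool"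
  for G S where
  refl: "cox_cong G S u u"
| sym: "cox_cong G S u v \<Longrightarrow> cox_cong G S v u"
| trans: "cox_cong G S u v \<Longrightarrow> cox_cong G S v w \<Longrightarrow> cox_cong G S u w"
| rel: "s \<in> S \<Longrightarrow> s' \<in> S \<Longrightarrow> elem_ord G (s \<otimes>\<^bsub>G\<^esub> s') > 0 \<Longrightarrow>
     cox_cong G S (concat (replicate (elem_ord G (s \<otimes>\<^bsub>G\<^esub> s')) [s, s'])) []"
| ctx: "cox_cong G S u v \<Longrightarrow> cox_cong G S (a @ u @ b) (a @ v @ b)"

text \<open>(G,S) is a Coxeter system: S is a set of involutions generating G, and
  G is presented by S subject to the relations (s s')^m(s,s') = 1.\<close>
definition coxeter_system :: "('g, 'b) monoid_scheme \<Rightarrow> 'g set \<Rightarrow> bool" where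
  "coxeter_system G S \<longleftrightarrow> group G \<and> S \<subseteq> carrier G
     \<and> (\<forall>s\<in>S. s \<noteq> \<one>\<^bsub>G\<^esub> \<and> s \<otimes>\<^bsub>G\<^esub> s = \<one>\<^bsub>G\<^esub>)
     \<and> carrier G = {wprod G ws | ws. set ws \<subseteq> S}
     \<and> (\<forall>u v. set u \<subseteq> S \<longrightarrow> set v \<subseteq> S \<longrightarrow> wprod G u = wprod G v \<longrightarrow> cox_cong G S u v)"

definition cox_len :: "('g, 'b) monoid_scheme \<Rightarrow> 'g set \<Rightarrow> 'g \<Rightarrow> nat" where
  "cox_len G S g = (LEAST n. \<exists>ws. set ws \<subseteq> S \<and> length ws = n \<and> wprod G ws = g)"

definition special_subgroup :: "('g, 'b) monoid_scheme \<Rightarrow> 'g set \<Rightarrow> 'g set" where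
  "special_subgroup G X = {wprod G ws | ws. set ws \<subseteq> X}"

definition poincare_fps :: "('g, 'b) monoid_scheme \<Rightarrow> 'g set \<Rightarrow> 'g set \<Rightarrow> rat fps" where
  "poincare_fps G S X =
     Abs_fps (\<lambda>n. of_nat (card {g \<in> special_subgroup G X. cox_len G S g = n}))"

text \<open>Poincare polynomial W_X(t) (meaningful when W_X is finite).\<close>
definition poincare_poly :: "('g, 'b) monoid_scheme \<Rightarrow> 'g set \<Rightarrow> 'g set \<Rightarrow> rat poly" where
  "poincare_poly G S X = (\<Sum>g\<in>special_subgroup G X. monom 1 (cox_len G S g))"

definition eps :: "'g set \<Rightarrow> rat" where
  "eps X = (-1) ^ card X"

text \<open>Denominator of the reduced fraction p/q with q monic representing the power
  series c / F, i.e. p = (c/F) q, p and q coprime.\<close>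
definition reduced_denom :: "rat \<Rightarrow> rat fps \<Rightarrow> rat poly" where
  "reduced_denom c F = (THE q. lead_coeff q = 1 \<and>
      (\<exists>p. coprime p q \<and> fps_of_poly p * F = fps_const c * fps_of_poly q))"

definition Virg :: "('g, 'b) monoid_scheme \<Rightarrow> 'g set \<Rightarrow> rat poly" where
  "Virg G D = Lcm {poincare_poly G D X | X. X \<subset> D \<and> finite (special_subgroup G X)}"

end

theory Submission
  imports Defs "HOL-Algebra.Coset"
begin

text \<open>
  If W_X is finite, W_X(t) is a polynomial
  with constant term 1, so the reduced denominator of eps(X)/W_X(t) is W_X(t) itself and
  Virg(D) divides the lcm.  Conversely Virg(D)/W_X(t) is a polynomial for every proper X:
  by definition when W_X is finite, and by induction on |X| when W_X is infinite, using
  Steinberg's relation  sum_(Y subset of X) eps(Y)/W_Y(t) = 0.  Hence every reduced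
  denominator divides Virg(D).

  Steinberg's relation comes from the factorization W_X(t) = W_X^Y(t) W_Y(t) over minimal
  coset representatives, together with the fact that an element having all of X as right
  descents forces W_X to be finite.  All of this is derived from the Coxeter presentation:
  the parity of reflections along a word is invariant under the Coxeter relations, which
  gives inversion sets N(g) with |N(g)| = l(g) and thus the exchange condition; the exchange
  condition yields the coset decomposition; and a dihedral argument shows that the set of
  subword products of a reduced word depends only on the element.
\<close>

lemma wprod_Nil [simp]: "wprod G [] = \<one>\<^bsub>G\<^esub>"
  by (simp add: wprod_def)

lemma wprod_Cons [simp]: "wprod G (a # ws) = a \<otimes>\<^bsub>G\<^esub> wprod G ws"
  by (simp add: wprod_def)

lemma odd_count_distinct: "distinct xs \<Longrightarrow> {t. odd (count_list xs t)} = set xs"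
  by (induction xs) (auto simp: count_notin)

context group
begin

lemma wprod_closed [simp]: "set ws \<subseteq> carrier G \<Longrightarrow> wprod G ws \<in> carrier G"
  by (induction ws) auto

lemma wprod_append:
  "set u \<subseteq> carrier G \<Longrightarrow> set v \<subseteq> carrier G \<Longrightarrow> wprod G (u @ v) = wprod G u \<otimes> wprod G v"
  by (induction u) (auto simp: m_assoc)

lemma wprod_alternating_power:
  "s \<in> carrier G \<Longrightarrow> s' \<in> carrier G \<Longrightarrow> wprod G (concat (replicate k [s, s'])) = (s \<otimes> s') [^] k"
proof (induction k)
  case (Suc k)
  then have "wprod G (concat (replicate (Suc k) [s, s'])) = (s \<otimes> s') \<otimes> (s \<otimes> s') [^] k"
    by (simp add: m_assoc)
  also have "\<dots> = (s \<otimes> s') [^] Suc k"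
    using Suc.prems by (simp only: nat_pow_Suc2 m_closed)
  finally show ?case .
qed simp

lemma elem_ord_pow: "elem_ord G x > 0 \<Longrightarrow> x [^] elem_ord G x = \<one>"
  unfolding elem_ord_def by (auto split: if_splits intro: LeastI2_ex)

definition conj_by :: "'a \<Rightarrow> 'a \<Rightarrow> 'a" where
  "conj_by c t = c \<otimes> t \<otimes> inv c"

lemma conj_by_closed [simp]: "c \<in> carrier G \<Longrightarrow> t \<in> carrier G \<Longrightarrow> conj_by c t \<in> carrier G"
  by (simp add: conj_by_def)

lemma conj_by_conj_by:
  "a \<in> carrier G \<Longrightarrow> b \<in> carrier G \<Longrightarrow> t \<in> carrier G \<Longrightarrow> conj_by a (conj_by b t) = conj_by (a \<otimes> b) t"
  by (simp add: conj_by_def inv_mult_group m_assoc)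

lemma count_list_conj_by:
  assumes "set L \<subseteq> carrier G" "c \<in> carrier G" "t \<in> carrier G"
  shows "count_list (map (conj_by c) L) t = count_list L (conj_by (inv c) t)"
  using assms(1)
proof (induction L)
  case (Cons x L)
  have "conj_by c x = t \<longleftrightarrow> x = conj_by (inv c) t"
    using Cons.prems assms(2,3) by (auto simp: conj_by_conj_by) (auto simp: conj_by_def m_assoc)
  with Cons show ?case by auto
qed simp

text \<open>The reflection sequence of a word s_1 ... s_n: its i-th entry is the conjugate
  (s_1 ... s_(i-1)) s_i (s_1 ... s_(i-1))^-1, the element by which one multiplies on the
  left to delete the letter s_i (when the s_j are involutions).\<close>
fun refl_seq :: "'a list \<Rightarrow> 'a list" where
  "refl_seq [] = []"
| "refl_seq (a # w) = a # map (conj_by a) (refl_seq w)"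

lemma length_refl_seq [simp]: "length (refl_seq w) = length w"
  by (induction w) auto

lemma refl_seq_closed: "set w \<subseteq> carrier G \<Longrightarrow> set (refl_seq w) \<subseteq> carrier G"
  by (induction w) auto

lemma refl_seq_append:
  assumes "set u \<subseteq> carrier G" "set v \<subseteq> carrier G"
  shows "refl_seq (u @ v) = refl_seq u @ map (conj_by (wprod G u)) (refl_seq v)"
  using assms(1)
proof (induction u)
  case Nil
  then show ?case
    using refl_seq_closed[OF assms(2)] by (auto simp: conj_by_def intro!: map_idI[symmetric])
next
  case (Cons a u)
  have "map (conj_by a) (map (conj_by (wprod G u)) (refl_seq v))
      = map (conj_by (a \<otimes> wprod G u)) (refl_seq v)"
    using refl_seq_closed[OF assms(2)] Cons.prems by (auto simp: conj_by_conj_by)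
  with Cons show ?case by simp
qed

lemma refl_seq_nth:
  assumes "set w \<subseteq> carrier G" "i < length w"
  shows "refl_seq w ! i = conj_by (wprod G (take i w)) (w ! i)"
proof -
  have w: "w = take i w @ (w ! i) # drop (Suc i) w"
    using assms(2) by (simp add: Cons_nth_drop_Suc)
  have "set (take i w) \<subseteq> carrier G" "set ((w ! i) # drop (Suc i) w) \<subseteq> carrier G"
    using assms by (auto dest: in_set_takeD in_set_dropD)
  from refl_seq_append[OF this] show ?thesis
    using assms(2) by (subst w) (simp add: nth_append)
qed

text \<open>The reflections occurring an odd number of times in the reflection sequence; for a
  reduced word this will be the set of left inversions of its product.\<close>
definition odd_refls :: "'a list \<Rightarrow> 'a set" where
  "odd_refls w = {t. odd (count_list (refl_seq w) t)}"

lemma odd_refls_subset: "odd_refls w \<subseteq> set (refl_seq w)"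
  unfolding odd_refls_def using count_notin by fastforce

lemma finite_odd_refls: "finite (odd_refls w)"
  using odd_refls_subset finite_subset by blast

lemma odd_refls_append:
  assumes "set u \<subseteq> carrier G" "set v \<subseteq> carrier G" "t \<in> carrier G"
  shows "t \<in> odd_refls (u @ v) \<longleftrightarrow>
           (t \<in> odd_refls u) \<noteq> (conj_by (inv (wprod G u)) t \<in> odd_refls v)"
  using count_list_conj_by[OF refl_seq_closed[OF assms(2)] _ assms(3), of "wprod G u"] assms
  by (simp add: odd_refls_def refl_seq_append count_list_append)

end

section \<open>Coxeter systems: the reflection cocycle and the exchange condition\<close>

locale coxeter = group G for G :: "('g, 'b) monoid_scheme" (structure) +
  fixes D :: "'g set"
  assumes D_sub: "D \<subseteq> carrier G"
    and D_ne: "\<And>s. s \<in> D \<Longrightarrow> s \<noteq> \<one>"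
    and D_inv: "\<And>s. s \<in> D \<Longrightarrow> s \<otimes> s = \<one>"
    and generated: "carrier G = {wprod G ws | ws. set ws \<subseteq> D}"
    and presented: "\<And>u v. set u \<subseteq> D \<Longrightarrow> set v \<subseteq> D \<Longrightarrow> wprod G u = wprod G v \<Longrightarrow> cox_cong G D u v"

lemma coxeter_systemD: "coxeter_system G D \<Longrightarrow> coxeter G D"
  unfolding coxeter_system_def coxeter_def coxeter_axioms_def by blast

context coxeter
begin

lemma D_carrier [simp]: "s \<in> D \<Longrightarrow> s \<in> carrier G"
  using D_sub by auto

lemma D_inv_eq [simp]: "s \<in> D \<Longrightarrow> inv s = s"
  using D_inv by (simp add: inv_equality)

lemma wprod_closedD [simp]: "set ws \<subseteq> D \<Longrightarrow> wprod G ws \<in> carrier G"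
  using D_sub by (intro wprod_closed) auto

lemma wprod_appendD: "set u \<subseteq> D \<Longrightarrow> set v \<subseteq> D \<Longrightarrow> wprod G (u @ v) = wprod G u \<otimes> wprod G v"
  using D_sub by (intro wprod_append) auto

lemma cancel_left [simp]:
  "a \<in> carrier G \<Longrightarrow> x \<in> carrier G \<Longrightarrow> inv a \<otimes> (a \<otimes> x) = x"
  "a \<in> carrier G \<Longrightarrow> x \<in> carrier G \<Longrightarrow> a \<otimes> (inv a \<otimes> x) = x"
  by (simp_all add: m_assoc[symmetric])

lemma refl_seq_alternating:
  assumes "s \<in> D" "s' \<in> D"
  shows "refl_seq (concat (replicate k [s, s'])) = map (\<lambda>i. (s \<otimes> s') [^] i \<otimes> s) [0..<2*k]"
proof (induction k)
  case (Suc k)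
  define r where "r = s \<otimes> s'"
  define f where "f = (\<lambda>i::nat. r [^] i \<otimes> s)"
  have sc: "s \<in> carrier G" "s' \<in> carrier G" "r \<in> carrier G"
    using assms by (auto simp: r_def)
  have f1: "conj_by s s' = f 1"
    using sc assms by (simp add: f_def conj_by_def r_def m_assoc)
  have f2: "conj_by s (conj_by s' (f i)) = f (i + 2)" for i
  proof -
    have "conj_by s (conj_by s' (f i)) = conj_by r (f i)"
      using sc by (simp add: conj_by_conj_by f_def r_def)
    also have "\<dots> = r \<otimes> (r [^] i \<otimes> (s \<otimes> inv r))"
      using sc by (simp add: f_def conj_by_def m_assoc)
    also have "s \<otimes> inv r = r \<otimes> s"
      using sc assms by (simp add: r_def inv_mult_group m_assoc)
    also have "r \<otimes> (r [^] i \<otimes> (r \<otimes> s)) = (r \<otimes> r [^] i \<otimes> r) \<otimes> s"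
      using sc by (simp add: m_assoc)
    also have "r \<otimes> r [^] i \<otimes> r = r [^] Suc (Suc i)"
      using sc by (simp only: nat_pow_Suc2[symmetric] nat_pow_Suc[symmetric] m_closed nat_pow_closed)
    finally show ?thesis by (simp add: f_def)
  qed
  have "refl_seq (concat (replicate (Suc k) [s, s']))
      = s # conj_by s s' # map (\<lambda>t. conj_by s (conj_by s' t)) (map f [0..<2*k])"
    using Suc by (simp add: f_def r_def)
  also have "\<dots> = f 0 # f 1 # map (\<lambda>i. f (i + 2)) [0..<2*k]"
    using f1 f2 sc by (simp add: f_def)
  also have "\<dots> = map f [0..<2 * Suc k]"
    by (rule nth_equalityI) (auto simp: nth_Cons simp del: upt_Suc split: nat.split)
  finally show ?case by (simp add: f_def r_def)
qed simp

text \<open>In a defining relator (s s')^m every reflection occurs an even number of times,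
  since the reflection sequence is periodic with period m.\<close>
lemma odd_refls_relator:
  assumes "s \<in> D" "s' \<in> D" "elem_ord G (s \<otimes> s') > 0"
  shows "odd_refls (concat (replicate (elem_ord G (s \<otimes> s')) [s, s'])) = {}"
proof -
  define m where "m = elem_ord G (s \<otimes> s')"
  define f where "f = (\<lambda>i::nat. (s \<otimes> s') [^] i \<otimes> s)"
  have sc: "s \<in> carrier G" "s' \<in> carrier G"
    using assms by auto
  have "(s \<otimes> s') [^] m = \<one>"
    using elem_ord_pow[OF assms(3)] by (simp add: m_def)
  moreover have "(s \<otimes> s') [^] (i + m) = (s \<otimes> s') [^] i \<otimes> (s \<otimes> s') [^] m" for i
    using sc by (simp only: nat_pow_mult m_closed)
  ultimately have periodic: "f (i + m) = f i" for i
    using sc by (simp add: f_def)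
  have "[0..<2*m] = [0..<m] @ [m..<m+m]"
    by (metis mult_2 upt_add_eq_append zero_le)
  also have "[m..<m+m] = map (\<lambda>i. i + m) [0..<m]"
    by (rule map_add_upt[symmetric])
  finally have "[0..<2*m] = [0..<m] @ map (\<lambda>i. i + m) [0..<m]" .
  then have "map f [0..<2*m] = map f [0..<m] @ map f [0..<m]"
    by (simp add: periodic comp_def)
  then show ?thesis
    using refl_seq_alternating[OF assms(1,2), of m]
    by (simp add: odd_refls_def count_list_append m_def f_def)
qed

lemma cox_cong_invariant:
  assumes "cox_cong G D u v"
  shows "(set u \<subseteq> carrier G \<longleftrightarrow> set v \<subseteq> carrier G) \<and>
    (set u \<subseteq> carrier G \<longrightarrow> wprod G u = wprod G v \<and> odd_refls u = odd_refls v)"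
  using assms
proof (induction rule: cox_cong.induct)
  case (rel s s')
  then show ?case
    using wprod_alternating_power elem_ord_pow odd_refls_relator[OF rel] by (auto simp: odd_refls_def)
next
  case (ctx u v a b)
  show ?case
  proof (intro conjI impI)
    assume abu: "set (a @ u @ b) \<subseteq> carrier G"
    with ctx have v: "set v \<subseteq> carrier G" and uv: "wprod G u = wprod G v" "odd_refls u = odd_refls v"
      by auto
    show "wprod G (a @ u @ b) = wprod G (a @ v @ b)"
      using abu v uv by (simp add: wprod_append)
    have "t \<in> odd_refls (a @ u @ b) \<longleftrightarrow> t \<in> odd_refls (a @ v @ b)" for t
    proof (cases "t \<in> carrier G")
      case True
      then show ?thesis
        using abu v uv by (simp add: odd_refls_append wprod_append inv_mult_group m_assoc)
    next
      case False
      have "set (a @ u @ b) \<subseteq> carrier G" "set (a @ v @ b) \<subseteq> carrier G"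
        using abu v by auto
      then show ?thesis
        using False odd_refls_subset refl_seq_closed by blast
    qed
    then show "odd_refls (a @ u @ b) = odd_refls (a @ v @ b)"
      by blast
  qed (use ctx in auto)
qed auto

abbreviation len :: "'g \<Rightarrow> nat" where
  "len \<equiv> cox_len G D"

lemma len_word: "set w \<subseteq> D \<Longrightarrow> len (wprod G w) \<le> length w"
  unfolding cox_len_def by (rule Least_le) auto

lemma word_exists: "g \<in> carrier G \<Longrightarrow> \<exists>w. set w \<subseteq> D \<and> wprod G w = g"
  using generated by auto

lemma reduced_word_exists:
  assumes "g \<in> carrier G"
  shows "\<exists>w. set w \<subseteq> D \<and> wprod G w = g \<and> length w = len g"
proof -
  have "\<exists>n ws. set ws \<subseteq> D \<and> length ws = n \<and> wprod G ws = g"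
    using word_exists[OF assms] by auto
  then have "\<exists>ws. set ws \<subseteq> D \<and> length ws = len g \<and> wprod G ws = g"
    unfolding cox_len_def by (rule LeastI_ex)
  then show ?thesis by auto
qed

text \<open>By the presentation, the odd reflections of a word depend only on its product.\<close>
lemma odd_refls_eq:
  assumes "set u \<subseteq> D" "set v \<subseteq> D" "wprod G u = wprod G v"
  shows "odd_refls u = odd_refls v"
  using cox_cong_invariant[OF presented[OF assms]] assms(1) D_sub by auto

definition inversions :: "'g \<Rightarrow> 'g set" where
  "inversions g = odd_refls (SOME w. set w \<subseteq> D \<and> wprod G w = g)"

lemma inversions_word: "set w \<subseteq> D \<Longrightarrow> inversions (wprod G w) = odd_refls w"
  unfolding inversions_def
  by (rule someI2[of _ w]) (simp, metis odd_refls_eq)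

lemma finite_inversions: "g \<in> carrier G \<Longrightarrow> finite (inversions g)"
  using word_exists inversions_word finite_odd_refls by metis

lemma delete_letter:
  assumes "set w \<subseteq> D" "i < length w"
  shows "refl_seq w ! i \<otimes> wprod G w = wprod G (take i w @ drop (Suc i) w)"
proof -
  have w: "w = take i w @ (w ! i) # drop (Suc i) w"
    using assms(2) by (simp add: Cons_nth_drop_Suc)
  have s: "set (take i w) \<subseteq> D" "set (drop (Suc i) w) \<subseteq> D" "w ! i \<in> D"
    using assms by (auto dest: in_set_takeD in_set_dropD)
  define A where "A = wprod G (take i w)"
  define B where "B = wprod G (drop (Suc i) w)"
  have c: "A \<in> carrier G" "B \<in> carrier G" "w ! i \<in> carrier G"
    using s by (auto simp: A_def B_def)
  have "wprod G w = A \<otimes> (w ! i \<otimes> B)"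
    by (subst w, subst wprod_appendD) (use s in \<open>auto simp: A_def B_def\<close>)
  moreover have "refl_seq w ! i = A \<otimes> w ! i \<otimes> inv A"
    using refl_seq_nth assms D_sub by (auto simp: conj_by_def A_def)
  ultimately have "refl_seq w ! i \<otimes> wprod G w = A \<otimes> (w ! i \<otimes> w ! i) \<otimes> B"
    using c by (simp add: m_assoc)
  also have "\<dots> = wprod G (take i w @ drop (Suc i) w)"
    using D_inv s c by (simp add: wprod_appendD A_def B_def)
  finally show ?thesis .
qed

lemma refl_seq_involution: "set w \<subseteq> D \<Longrightarrow> x \<in> set (refl_seq w) \<Longrightarrow> x \<otimes> x = \<one>"
proof (induction w arbitrary: x)
  case (Cons a w)
  show ?case
  proof (cases "x = a")
    case False
    then obtain y where y: "y \<in> set (refl_seq w)" "x = conj_by a y"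
      using Cons by auto
    have c: "y \<in> carrier G" "a \<in> carrier G" and "y \<otimes> y = \<one>"
      using refl_seq_closed[of w] Cons y D_sub by auto
    have "x \<otimes> x = a \<otimes> (y \<otimes> y) \<otimes> inv a"
      using y c by (simp add: conj_by_def m_assoc)
    then show ?thesis
      using \<open>y \<otimes> y = \<one>\<close> c by simp
  qed (use Cons D_inv in simp)
qed simp

text \<open>A repeated entry in the reflection sequence would allow deleting two letters.\<close>
lemma reduced_refl_seq_distinct:
  assumes "set w \<subseteq> D" "length w = len (wprod G w)"
  shows "distinct (refl_seq w)"
proof (rule ccontr)
  assume "\<not> distinct (refl_seq w)"
  then obtain i j where ij: "i < j" "j < length w" "refl_seq w ! i = refl_seq w ! j"
    by (auto simp: distinct_conv_nth) (metis length_refl_seq linorder_neqE_nat)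
  define t where "t = refl_seq w ! i"
  define w' where "w' = take j w @ drop (Suc j) w"
  define w'' where "w'' = take i w' @ drop (Suc i) w'"
  have w'D: "set w' \<subseteq> D" and w''D: "set w'' \<subseteq> D"
    using assms(1) by (auto simp: w'_def w''_def dest: in_set_takeD in_set_dropD)
  have il: "i < length w'"
    using ij by (simp add: w'_def)
  have "take i w' = take i w" "w' ! i = w ! i"
    using ij by (auto simp: w'_def nth_append min_def)
  then have "refl_seq w' ! i = t"
    using refl_seq_nth[of w' i] refl_seq_nth[of w i] il ij w'D assms(1) D_sub by (auto simp: t_def)
  then have "wprod G w'' = t \<otimes> (t \<otimes> wprod G w)"
    using delete_letter[OF w'D il] delete_letter[OF assms(1) ij(2)] ij(3)
    by (simp add: w'_def w''_def t_def)
  also have "\<dots> = wprod G w"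
  proof -
    have "t \<in> set (refl_seq w)"
      using ij by (simp add: t_def)
    then have "t \<in> carrier G" "t \<otimes> t = \<one>"
      using refl_seq_involution[OF assms(1)] refl_seq_closed[of w] assms(1) D_sub by auto
    then show ?thesis
      using assms(1) by (simp add: m_assoc[symmetric])
  qed
  finally have "len (wprod G w) \<le> length w''"
    using len_word[OF w''D] by simp
  moreover have "length w'' < length w"
    using il ij by (simp add: w'_def w''_def)
  ultimately show False
    using assms(2) by simp
qed

lemma inversions_reduced:
  "set w \<subseteq> D \<Longrightarrow> length w = len (wprod G w) \<Longrightarrow> inversions (wprod G w) = set (refl_seq w)"
  using inversions_word[of w] odd_count_distinct[OF reduced_refl_seq_distinct[of w]]
  by (simp add: odd_refls_def)

lemma card_inversions: "g \<in> carrier G \<Longrightarrow> card (inversions g) = len g"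
  using reduced_word_exists inversions_reduced reduced_refl_seq_distinct distinct_card
  by (metis length_refl_seq)

text \<open>Right multiplication by a generator s toggles the reflection g s g^-1 in N(g), so
  the length changes by exactly one, decreasing iff g s g^-1 is an inversion of g.\<close>
lemma len_mult_gen:
  assumes "g \<in> carrier G" "s \<in> D"
  shows "(len (g \<otimes> s) = len g + 1 \<and> conj_by g s \<notin> inversions g)
       \<or> (len (g \<otimes> s) + 1 = len g \<and> conj_by g s \<in> inversions g)"
proof -
  obtain w where w: "set w \<subseteq> D" "wprod G w = g"
    using word_exists assms by blast
  have "refl_seq (w @ [s]) = refl_seq w @ [conj_by g s]"
    using refl_seq_append[of w "[s]"] assms w D_sub by auto
  then have "odd_refls (w @ [s]) = {t. (t \<in> odd_refls w) \<noteq> (t = conj_by g s)}"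
    by (auto simp: odd_refls_def count_list_append)
  moreover have "wprod G (w @ [s]) = g \<otimes> s"
    using w assms by (simp add: wprod_appendD)
  ultimately have N: "inversions (g \<otimes> s) = {t. (t \<in> inversions g) \<noteq> (t = conj_by g s)}"
    using inversions_word[of "w @ [s]"] inversions_word[OF w(1)] w assms by simp
  have fin: "finite (inversions g)"
    using finite_inversions assms by simp
  show ?thesis
  proof (cases "conj_by g s \<in> inversions g")
    case True
    then have "inversions (g \<otimes> s) = inversions g - {conj_by g s}"
      using N by auto
    then have "card (inversions (g \<otimes> s)) + 1 = card (inversions g)"
      using True fin by (simp add: card_Diff_singleton) (metis Suc_pred card_gt_0_iff empty_iff)
    then show ?thesis
      using card_inversions assms True by simp
  next
    case False
    then have "inversions (g \<otimes> s) = insert (conj_by g s) (inversions g)"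
      using N by auto
    then show ?thesis
      using card_inversions[of "g \<otimes> s"] card_inversions[of g] assms False fin by simp
  qed
qed

lemma len_mult_gen_cases:
  "g \<in> carrier G \<Longrightarrow> s \<in> D \<Longrightarrow> len (g \<otimes> s) = len g + 1 \<or> len (g \<otimes> s) + 1 = len g"
  using len_mult_gen by blast

lemma exchange:
  assumes "set w \<subseteq> D" "length w = len (wprod G w)" "s \<in> D"
    and "len (wprod G w \<otimes> s) < len (wprod G w)"
  shows "\<exists>i<length w. wprod G (take i w @ drop (Suc i) w) = wprod G w \<otimes> s"
proof -
  let ?g = "wprod G w"
  have gc: "?g \<in> carrier G"
    using assms by simp
  have "conj_by ?g s \<in> set (refl_seq w)"
    using len_mult_gen[OF gc assms(3)] assms(4) inversions_reduced[OF assms(1,2)] by auto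
  then obtain i where i: "i < length w" "refl_seq w ! i = conj_by ?g s"
    by (metis in_set_conv_nth length_refl_seq)
  have "wprod G (take i w @ drop (Suc i) w) = conj_by ?g s \<otimes> ?g"
    using delete_letter[OF assms(1) i(1)] i by simp
  also have "\<dots> = ?g \<otimes> s"
    using gc assms(3) by (simp add: conj_by_def m_assoc)
  finally show ?thesis
    using i by blast
qed

lemma len_zero: "g \<in> carrier G \<Longrightarrow> len g = 0 \<Longrightarrow> g = \<one>"
  using reduced_word_exists[of g] by auto

lemma len_one [simp]: "len \<one> = 0"
  using len_word[of "[]"] by simp

lemma len_gen: "s \<in> D \<Longrightarrow> len s = 1"
  using len_word[of "[s]"] len_zero[of s] D_ne[of s] by fastforce

lemma inv_wprod: "set ws \<subseteq> D \<Longrightarrow> inv (wprod G ws) = wprod G (rev ws)"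
  by (induction ws) (auto simp: inv_mult_group wprod_appendD)

lemma reduced_butlast:
  assumes "set r \<subseteq> D" "s \<in> D" "length (r @ [s]) = len (wprod G (r @ [s]))"
  shows "length r = len (wprod G r)"
proof -
  have "wprod G (r @ [s]) = wprod G r \<otimes> s"
    using assms by (simp add: wprod_appendD)
  then have "len (wprod G (r @ [s])) \<le> len (wprod G r) + 1"
    using len_mult_gen_cases[of "wprod G r" s] assms by auto
  then show ?thesis
    using len_word[OF assms(1)] assms(3) by simp
qed

section \<open>Special subgroups and the coset decomposition\<close>

abbreviation W :: "'g set \<Rightarrow> 'g set" where
  "W Y \<equiv> special_subgroup G Y"

lemma W_iff: "x \<in> W Y \<longleftrightarrow> (\<exists>ws. set ws \<subseteq> Y \<and> wprod G ws = x)"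
  unfolding special_subgroup_def by auto

lemma W_carrier: "Y \<subseteq> D \<Longrightarrow> x \<in> W Y \<Longrightarrow> x \<in> carrier G"
  unfolding W_iff using wprod_closedD by blast

lemma W_one: "\<one> \<in> W Y"
  unfolding W_iff by (rule exI[of _ "[]"]) simp

lemma W_gen: "Y \<subseteq> D \<Longrightarrow> s \<in> Y \<Longrightarrow> s \<in> W Y"
  unfolding W_iff by (rule exI[of _ "[s]"]) auto

lemma W_mult:
  assumes "Y \<subseteq> D" "x \<in> W Y" "y \<in> W Y"
  shows "x \<otimes> y \<in> W Y"
proof -
  obtain a b where "set a \<subseteq> Y" "wprod G a = x" "set b \<subseteq> Y" "wprod G b = y"
    using assms(2,3) unfolding W_iff by blast
  then have "set (a @ b) \<subseteq> Y" "wprod G (a @ b) = x \<otimes> y"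
    using assms(1) by (auto simp: wprod_appendD)
  then show ?thesis
    unfolding W_iff by blast
qed

lemma W_inv:
  assumes "Y \<subseteq> D" "x \<in> W Y"
  shows "inv x \<in> W Y"
proof -
  obtain a where "set a \<subseteq> Y" "wprod G a = x"
    using assms(2) unfolding W_iff by blast
  then have "set (rev a) \<subseteq> Y" "wprod G (rev a) = inv x"
    using assms(1) inv_wprod[of a] by auto
  then show ?thesis
    unfolding W_iff by blast
qed

lemma W_mono: "Y \<subseteq> X \<Longrightarrow> W Y \<subseteq> W X"
  unfolding special_subgroup_def by blast

text \<open>Every element of W_Y has a reduced word (with respect to D) using letters from Y only:
  reduce a Y-word letter by letter with the exchange condition.\<close>
lemma W_reduced_word:
  assumes "Y \<subseteq> D" "x \<in> W Y"
  shows "\<exists>r. set r \<subseteq> Y \<and> wprod G r = x \<and> length r = len x"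
proof -
  have "\<exists>r. set r \<subseteq> Y \<and> wprod G r = wprod G w \<and> length r = len (wprod G w)" if "set w \<subseteq> Y" for w
    using that
  proof (induction w rule: rev_induct)
    case (snoc s w)
    then obtain r where r: "set r \<subseteq> Y" "wprod G r = wprod G w" "length r = len (wprod G w)"
      by auto
    have D: "s \<in> D" "set w \<subseteq> D" "set r \<subseteq> D"
      using snoc r assms(1) by auto
    let ?g = "wprod G w"
    have ws: "wprod G (w @ [s]) = ?g \<otimes> s"
      using D by (simp add: wprod_appendD)
    have "len (?g \<otimes> s) = len ?g + 1 \<or> len (?g \<otimes> s) + 1 = len ?g"
      using len_mult_gen_cases D by simp
    then show ?case
    proof
      assume "len (?g \<otimes> s) = len ?g + 1"
      then show ?thesis
        using r D snoc.prems ws by (intro exI[of _ "r @ [s]"]) (simp add: wprod_appendD)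
    next
      assume dn: "len (?g \<otimes> s) + 1 = len ?g"
      then obtain i where "i < length r" "wprod G (take i r @ drop (Suc i) r) = ?g \<otimes> s"
        using exchange[of r s] r D by auto
      then show ?thesis
        using r dn ws by (intro exI[of _ "take i r @ drop (Suc i) r"])
          (auto dest: in_set_takeD in_set_dropD)
    qed
  qed (intro exI[of _ "[]"], simp)
  then show ?thesis
    using assms(2) unfolding W_iff by blast
qed

definition coset_minimal :: "'g set \<Rightarrow> 'g \<Rightarrow> bool" where
  "coset_minimal Y z \<longleftrightarrow> z \<in> carrier G \<and> (\<forall>u\<in>W Y. len z \<le> len (z \<otimes> u))"

lemma exchange_append:
  assumes "set q \<subseteq> D" "set r \<subseteq> D" "s \<in> D" "length (q @ r) = len (wprod G q \<otimes> wprod G r)"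
    and "len (wprod G q \<otimes> wprod G r \<otimes> s) < len (wprod G q \<otimes> wprod G r)"
  shows "(\<exists>q'. set q' \<subseteq> D \<and> length q' < length q \<and> wprod G q' \<otimes> wprod G r = wprod G q \<otimes> wprod G r \<otimes> s)
       \<or> (\<exists>r'. set r' \<subseteq> D \<and> length r' < length r \<and> wprod G r' = wprod G r \<otimes> s)"
proof -
  have qr: "set (q @ r) \<subseteq> D" "wprod G (q @ r) = wprod G q \<otimes> wprod G r"
    using assms by (simp_all add: wprod_appendD)
  obtain i where i: "i < length (q @ r)"
    "wprod G (take i (q @ r) @ drop (Suc i) (q @ r)) = wprod G q \<otimes> wprod G r \<otimes> s"
    using exchange[OF qr(1) _ assms(3)] assms(4,5) qr(2) by auto
  show ?thesis
  proof (cases "i < length q")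
    case True
    define q' where "q' = take i q @ drop (Suc i) q"
    have q'D: "set q' \<subseteq> D"
      using assms(1) by (auto simp: q'_def dest: in_set_takeD in_set_dropD)
    have "take i (q @ r) @ drop (Suc i) (q @ r) = q' @ r"
      using True by (simp add: q'_def)
    then have "wprod G q' \<otimes> wprod G r = wprod G q \<otimes> wprod G r \<otimes> s"
      using i q'D assms(2) by (simp add: wprod_appendD)
    then show ?thesis
      using q'D True by (intro disjI1 exI[of _ q']) (auto simp: q'_def)
  next
    case False
    define r' where "r' = take (i - length q) r @ drop (Suc i - length q) r"
    have r'D: "set r' \<subseteq> D"
      using assms(2) by (auto simp: r'_def dest: in_set_takeD in_set_dropD)
    have "take i (q @ r) @ drop (Suc i) (q @ r) = q @ r'"
      using False by (simp add: r'_def Suc_diff_le)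
    then have "wprod G q \<otimes> wprod G r' = wprod G q \<otimes> (wprod G r \<otimes> s)"
      using i assms r'D by (simp add: wprod_appendD m_assoc)
    then have "wprod G r' = wprod G r \<otimes> s"
      using assms r'D by simp
    then show ?thesis
      using False i r'D by (intro disjI2 exI[of _ r']) (auto simp: r'_def)
  qed
qed

lemma coset_minimal_len_add:
  assumes Y: "Y \<subseteq> D" and z: "coset_minimal Y z" and v: "v \<in> W Y"
  shows "len (z \<otimes> v) = len z + len v"
proof -
  have zc: "z \<in> carrier G"
    using z by (simp add: coset_minimal_def)
  obtain q where q: "set q \<subseteq> D" "wprod G q = z" "length q = len z"
    using reduced_word_exists zc by blast
  have "len (z \<otimes> wprod G r) = len z + length r"
    if "set r \<subseteq> Y" "length r = len (wprod G r)" for r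
    using that
  proof (induction r rule: rev_induct)
    case (snoc s r)
    have D: "s \<in> D" "set r \<subseteq> D" "s \<in> Y" "set r \<subseteq> Y"
      using snoc Y by auto
    let ?v = "wprod G r"
    have IH: "len (z \<otimes> ?v) = len z + length r"
      using snoc.IH[OF D(4)] reduced_butlast[OF D(2,1) snoc.prems(2)] by simp
    have eq: "z \<otimes> wprod G (r @ [s]) = z \<otimes> ?v \<otimes> s"
      using D zc by (simp add: wprod_appendD m_assoc)
    have "len (z \<otimes> ?v \<otimes> s) = len (z \<otimes> ?v) + 1 \<or> len (z \<otimes> ?v \<otimes> s) + 1 = len (z \<otimes> ?v)"
      using len_mult_gen_cases D zc by simp
    then show ?case
    proof
      assume dn: "len (z \<otimes> ?v \<otimes> s) + 1 = len (z \<otimes> ?v)"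
      have "length (q @ r) = len (wprod G q \<otimes> wprod G r)"
        using q IH by simp
      from exchange_append[OF q(1) D(2,1) this] dn q(2)
      consider q' where "set q' \<subseteq> D" "length q' < length q" "wprod G q' \<otimes> ?v = z \<otimes> ?v \<otimes> s"
        | r' where "set r' \<subseteq> D" "length r' < length r" "wprod G r' = ?v \<otimes> s"
        by auto
      then show ?thesis
      proof cases
        case (1 q')
        text \<open>Then z is not minimal: z (v s v^-1) = q' is shorter than z.\<close>
        have c: "wprod G q' \<in> carrier G" "?v \<in> carrier G"
          using 1(1) D by auto
        have "wprod G q' = wprod G q' \<otimes> ?v \<otimes> inv ?v"
          using c by (simp add: m_assoc)
        also have "\<dots> = z \<otimes> ?v \<otimes> s \<otimes> inv ?v"
          using 1(3) by simp
        also have "\<dots> = z \<otimes> (?v \<otimes> s \<otimes> inv ?v)"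
          using zc c D by (simp add: m_assoc)
        finally have "wprod G q' = z \<otimes> (?v \<otimes> s \<otimes> inv ?v)" .
        moreover have "?v \<in> W Y"
          using D(4) W_iff by blast
        then have "?v \<otimes> s \<otimes> inv ?v \<in> W Y"
          using D(3) by (meson W_mult[OF Y] W_inv[OF Y] W_gen[OF Y])
        ultimately have "len z \<le> len (wprod G q')"
          using z by (simp add: coset_minimal_def)
        then show ?thesis
          using len_word[OF 1(1)] 1(2) q by simp
      next
        case (2 r')
        text \<open>Then r s was not reduced.\<close>
        then show ?thesis
          using len_word[of r'] snoc.prems(2) D by (simp add: wprod_appendD)
      qed
    qed (use eq IH in simp)
  qed (use zc in simp)
  then show ?thesis
    using W_reduced_word[OF Y v] by auto
qed

lemma coset_decomposition:
  assumes Y: "Y \<subseteq> D" and w: "w \<in> carrier G"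
  shows "\<exists>z v. v \<in> W Y \<and> coset_minimal Y z \<and> w = z \<otimes> v"
proof -
  obtain v0 where v0: "v0 \<in> W Y" "\<And>y. y \<in> W Y \<Longrightarrow> len (w \<otimes> v0) \<le> len (w \<otimes> y)"
    using ex_has_least_nat[of "\<lambda>x. x \<in> W Y" \<one> "\<lambda>x. len (w \<otimes> x)"] W_one by blast
  have v0c: "v0 \<in> carrier G"
    using W_carrier[OF Y v0(1)] .
  have "len (w \<otimes> v0) \<le> len (w \<otimes> v0 \<otimes> u)" if u: "u \<in> W Y" for u
    using v0(2)[OF W_mult[OF Y v0(1) u]] w v0c W_carrier[OF Y u] by (simp add: m_assoc)
  then have "coset_minimal Y (w \<otimes> v0)"
    using w v0c by (simp add: coset_minimal_def)
  moreover have "w = w \<otimes> v0 \<otimes> inv v0"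
    using w v0c by (simp add: m_assoc)
  ultimately show ?thesis
    using W_inv[OF Y v0(1)] by blast
qed

lemma coset_minimal_iff:
  assumes Y: "Y \<subseteq> D"
  shows "coset_minimal Y z \<longleftrightarrow> z \<in> carrier G \<and> (\<forall>s\<in>Y. len z < len (z \<otimes> s))"
proof
  assume "coset_minimal Y z"
  then show "z \<in> carrier G \<and> (\<forall>s\<in>Y. len z < len (z \<otimes> s))"
    using coset_minimal_len_add[OF Y] W_gen[OF Y] len_gen Y by (auto simp: coset_minimal_def)
next
  assume z: "z \<in> carrier G \<and> (\<forall>s\<in>Y. len z < len (z \<otimes> s))"
  obtain z0 v where zv: "v \<in> W Y" "coset_minimal Y z0" "z = z0 \<otimes> v"
    using coset_decomposition[OF Y] z by blast
  have z0c: "z0 \<in> carrier G"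
    using zv(2) by (simp add: coset_minimal_def)
  have "v = \<one>"
  proof (rule ccontr)
    assume "v \<noteq> \<one>"
    then obtain r s where r: "set (r @ [s]) \<subseteq> Y" "wprod G (r @ [s]) = v" "length (r @ [s]) = len v"
      using W_reduced_word[OF Y zv(1)] by (metis rev_exhaust wprod_Nil)
    have D: "s \<in> Y" "s \<in> D" "set r \<subseteq> D" "wprod G r \<in> W Y"
      using r Y W_iff by auto
    text \<open>Then s is a right descent of z = z0 r s.\<close>
    have "v = wprod G r \<otimes> s"
      using r(2) D by (simp add: wprod_appendD)
    then have "z \<otimes> s = z0 \<otimes> (wprod G r \<otimes> (s \<otimes> s))"
      using zv(3) z0c D by (simp add: m_assoc)
    then have "z \<otimes> s = z0 \<otimes> wprod G r"
      using D D_inv by simp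
    then have "len (z \<otimes> s) = len z0 + len (wprod G r)"
      using coset_minimal_len_add[OF Y zv(2) D(4)] by simp
    moreover have "len z = len z0 + len v"
      using coset_minimal_len_add[OF Y zv(2) zv(1)] zv(3) by simp
    ultimately have "len (z \<otimes> s) < len z"
      using len_word[OF D(3)] r by simp
    then show False
      using z D by fastforce
  qed
  then show "coset_minimal Y z"
    using zv z0c by simp
qed

lemma coset_decomposition_unique:
  assumes Y: "Y \<subseteq> D" and z: "coset_minimal Y z1" "coset_minimal Y z2"
    and v: "v1 \<in> W Y" "v2 \<in> W Y" and eq: "z1 \<otimes> v1 = z2 \<otimes> v2"
  shows "z1 = z2 \<and> v1 = v2"
proof -
  have c: "v1 \<in> carrier G" "v2 \<in> carrier G" "z1 \<in> carrier G" "z2 \<in> carrier G"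
    using v W_carrier[OF Y] z by (auto simp: coset_minimal_def)
  define v where "v = v1 \<otimes> inv v2"
  have vW: "v \<in> W Y" "inv v \<in> W Y"
    using v W_mult[OF Y] W_inv[OF Y] by (auto simp: v_def)
  have vc: "v \<in> carrier G"
    using c by (simp add: v_def)
  have "z2 = z2 \<otimes> v2 \<otimes> inv v2"
    using c by (simp add: m_assoc)
  also have "\<dots> = z1 \<otimes> v"
    using c by (simp add: eq[symmetric] v_def m_assoc)
  finally have z2: "z2 = z1 \<otimes> v" .
  have z1: "z1 = z2 \<otimes> inv v"
    using z2 c vc by (simp add: m_assoc)
  have "len z2 = len z1 + len v"
    using coset_minimal_len_add[OF Y z(1) vW(1)] z2 by simp
  moreover have "len z1 = len z2 + len (inv v)"
    using coset_minimal_len_add[OF Y z(2) vW(2)] z1 by simp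
  ultimately have "v = \<one>"
    using len_zero[OF vc] by linarith
  moreover have "v1 = v \<otimes> v2"
    using c by (simp add: v_def m_assoc)
  ultimately show ?thesis
    using z2 c by simp
qed

section \<open>Elements with two right descents\<close>

fun alt_word :: "nat \<Rightarrow> 'g \<Rightarrow> 'g \<Rightarrow> 'g list" where
  "alt_word 0 x y = []"
| "alt_word (Suc n) x y = alt_word n y x @ [x]"

lemma alt_word_set: "set (alt_word n x y) \<subseteq> {x, y}"
  by (induction n arbitrary: x y) auto

lemma length_alt_word [simp]: "length (alt_word n x y) = n"
  by (induction n arbitrary: x y) auto

lemma alt_word_D: "x \<in> D \<Longrightarrow> y \<in> D \<Longrightarrow> set (alt_word n x y) \<subseteq> D"
  using alt_word_set by blast

text \<open>A reduced word in two letters cannot repeat a letter, so it is alternating.\<close>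
lemma reduced_two_letters_alternating:
  assumes "x \<in> D" "y \<in> D" "x \<noteq> y"
    and "set r \<subseteq> {x, y}" "length r = len (wprod G r)" "r \<noteq> []" "last r = x"
  shows "r = alt_word (length r) x y"
  using assms
proof (induction r arbitrary: x y rule: rev_induct)
  case (snoc x' r)
  have rD: "set r \<subseteq> D" and x': "x' = x"
    using snoc.prems by auto
  show ?case
  proof (cases r rule: rev_cases)
    case (snoc r' x'')
    have "x'' \<noteq> x"
    proof
      assume "x'' = x"
      then have "wprod G (r @ [x']) = wprod G r'"
        using snoc x' rD snoc.prems(1) D_inv by (simp add: wprod_appendD m_assoc)
      then show False
        using len_word[of r'] rD snoc.prems(5) snoc by simp
    qed
    then have "x'' = y"
      using snoc.prems(4) snoc by auto
    moreover have "length r = len (wprod G r)"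
      using reduced_butlast[OF rD] snoc.prems x' by simp
    ultimately have "r = alt_word (length r) y x"
      using snoc.IH[of y x] snoc.prems snoc by auto
    then show ?thesis
      using x' by simp
  qed (use x' in simp)
qed simp

text \<open>If a and b are both right descents of w, then w has reduced expressions
  z (...b a) and z (...a b): it ends with the longest element of the dihedral group of a, b.\<close>
lemma two_descents_alternating:
  assumes w: "w \<in> carrier G" and ab: "a \<in> D" "b \<in> D" "a \<noteq> b"
    and da: "len (w \<otimes> a) < len w" and db: "len (w \<otimes> b) < len w"
  shows "\<exists>z n. set z \<subseteq> D \<and> n \<ge> 1 \<and> length z + n = len w \<and>
     wprod G (z @ alt_word n a b) = w \<and> wprod G (z @ alt_word n b a) = w"
proof -
  define Y where "Y = {a, b}"
  have Y: "Y \<subseteq> D"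
    using ab by (auto simp: Y_def)
  obtain z v where zv: "v \<in> W Y" "coset_minimal Y z" "w = z \<otimes> v"
    using coset_decomposition[OF Y w] by blast
  have zc: "z \<in> carrier G" and vc: "v \<in> carrier G"
    using zv W_carrier[OF Y] by (auto simp: coset_minimal_def)
  have lw: "len w = len z + len v"
    using coset_minimal_len_add[OF Y zv(2,1)] zv(3) by simp
  text \<open>A descent c in Y of w is a descent of v, so v has a reduced Y-word ending in c.\<close>
  have ends_in: "\<exists>r. set r \<subseteq> Y \<and> length r = len v \<and> wprod G r = v \<and> r \<noteq> [] \<and> last r = c"
    if c: "c \<in> Y" "len (w \<otimes> c) < len w" for c
  proof -
    have cD: "c \<in> D"
      using c Y by auto
    have vcW: "v \<otimes> c \<in> W Y"
      using W_mult[OF Y zv(1) W_gen[OF Y c(1)]] .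
    have "w \<otimes> c = z \<otimes> (v \<otimes> c)"
      using zv(3) zc vc cD by (simp add: m_assoc)
    then have "len (v \<otimes> c) < len v"
      using coset_minimal_len_add[OF Y zv(2) vcW] lw c by simp
    then have lvc: "len (v \<otimes> c) + 1 = len v"
      using len_mult_gen_cases[OF vc cD] by auto
    obtain r where r: "set r \<subseteq> Y" "wprod G r = v \<otimes> c" "length r = len (v \<otimes> c)"
      using W_reduced_word[OF Y vcW] by blast
    have "wprod G (r @ [c]) = v \<otimes> c \<otimes> c"
      using r Y cD by (simp add: wprod_appendD)
    also have "\<dots> = v"
      using vc cD D_inv by (simp add: m_assoc)
    finally show ?thesis
      using r lvc c by (intro exI[of _ "r @ [c]"]) auto
  qed
  obtain ra where ra: "set ra \<subseteq> Y" "length ra = len v" "wprod G ra = v" "ra \<noteq> []" "last ra = a"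
    using ends_in[of a] da by (auto simp: Y_def)
  obtain rb where rb: "set rb \<subseteq> Y" "length rb = len v" "wprod G rb = v" "rb \<noteq> []" "last rb = b"
    using ends_in[of b] db by (auto simp: Y_def)
  have "ra = alt_word (len v) a b" "rb = alt_word (len v) b a"
    using reduced_two_letters_alternating[of a b ra] reduced_two_letters_alternating[of b a rb]
      ra rb ab by (auto simp: Y_def insert_commute)
  moreover obtain q where q: "set q \<subseteq> D" "wprod G q = z" "length q = len z"
    using reduced_word_exists zc by blast
  moreover have "len v \<ge> 1"
    using ra(2,4) by (cases ra) auto
  ultimately show ?thesis
    using lw zv(3) ra rb Y by (intro exI[of _ q] exI[of _ "len v"]) (auto simp: wprod_appendD)
qed

section \<open>Subword products and finiteness of special subgroups\<close>

fun subword_prods :: "'g list \<Rightarrow> 'g set" where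
  "subword_prods [] = {\<one>}"
| "subword_prods (a # w) = {\<one>, a} <#> subword_prods w"

lemma subword_prods_closed: "set w \<subseteq> carrier G \<Longrightarrow> subword_prods w \<subseteq> carrier G"
  by (induction w) (simp_all add: set_mult_closed)

lemma finite_subword_prods: "finite (subword_prods w)"
  by (induction w) (auto simp: set_mult_def)

lemma one_subword_prods: "\<one> \<in> subword_prods w"
  by (induction w) (force simp: set_mult_def)+

lemma subword_prods_append:
  assumes "set u \<subseteq> carrier G" "set v \<subseteq> carrier G"
  shows "subword_prods (u @ v) = subword_prods u <#> subword_prods v"
  using assms(1)
proof (induction u)
  case Nil
  then show ?case
    using subword_prods_closed[OF assms(2)] by (force simp: set_mult_def)
next
  case (Cons a u)
  then show ?case
    using subword_prods_closed[OF assms(2)] subword_prods_closed[of u]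
    by (simp add: set_mult_assoc)
qed

lemma subword_prods_snoc:
  assumes "set u \<subseteq> carrier G" "s \<in> carrier G"
  shows "subword_prods (u @ [s]) = subword_prods u \<union> (\<lambda>x. x \<otimes> s) ` subword_prods u"
  using subword_prods_append[of u "[s]"] subword_prods_closed[of u] assms
  by (force simp: set_mult_def)

lemma subword_prods_alt_word:
  assumes "x \<in> D" "y \<in> D"
  shows "subword_prods (alt_word (Suc n) x y) = insert (wprod G (alt_word (Suc n) x y))
           ((\<lambda>j. wprod G (alt_word j x y)) ` {..n} \<union> (\<lambda>j. wprod G (alt_word j y x)) ` {..n})"
  using assms
proof (induction n arbitrary: x y)
  case (Suc n)
  define P where "P x y j = wprod G (alt_word j x y)" for x y j
  define A where "A m = P x y ` {..m} \<union> P y x ` {..m}" for m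
  have step: "P y x j \<otimes> x = P x y (Suc j)" for j
    using Suc.prems alt_word_D by (simp add: P_def wprod_appendD)
  have step_back: "P x y (Suc j) \<otimes> x = P y x j" for j
    using Suc.prems alt_word_D by (simp add: P_def wprod_appendD m_assoc D_inv)
  have P0: "P x y 0 \<otimes> x = P x y (Suc 0)"
    using Suc.prems by (simp add: P_def)
  have "subword_prods (alt_word (Suc (Suc n)) x y)
      = insert (P y x (Suc n)) (A n) \<union> (\<lambda>g. g \<otimes> x) ` insert (P y x (Suc n)) (A n)"
    using subword_prods_snoc[of "alt_word (Suc n) y x" x] Suc alt_word_D[of y x "Suc n"]
    by (simp add: P_def A_def Un_commute subset_iff)
  also have "\<dots> = insert (P x y (Suc (Suc n))) (A (Suc n))"
  proof -
    have "(\<lambda>g. g \<otimes> x) ` A n \<subseteq> A (Suc n)"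
    proof
      fix g assume "g \<in> (\<lambda>g. g \<otimes> x) ` A n"
      then consider j where "j \<le> n" "g = P x y j \<otimes> x" | j where "j \<le> n" "g = P y x j \<otimes> x"
        by (auto simp: A_def)
      then show "g \<in> A (Suc n)"
      proof cases
        case (1 j)
        then show ?thesis
          using P0 step_back by (cases j) (auto simp: A_def)
      qed (auto simp: A_def step)
    qed
    moreover have "A (Suc n) = insert (P x y (Suc n)) (insert (P y x (Suc n)) (A n))"
      by (auto simp: A_def atMost_Suc)
    moreover have "P x y (Suc n) \<in> (\<lambda>g. g \<otimes> x) ` A n"
      using step[of n] by (force simp: A_def)
    moreover have "(\<lambda>g. g \<otimes> x) ` insert (P y x (Suc n)) (A n)
        = insert (P x y (Suc (Suc n))) ((\<lambda>g. g \<otimes> x) ` A n)"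
      using step[of "Suc n"] by simp
    ultimately show ?thesis
      by auto
  qed
  finally show ?case
    by (simp add: P_def A_def)
qed (auto simp: set_mult_def)

lemma subword_prods_alt_word_sym:
  assumes "a \<in> D" "b \<in> D" "wprod G (alt_word n a b) = wprod G (alt_word n b a)"
  shows "subword_prods (alt_word n a b) = subword_prods (alt_word n b a)"
proof (cases n)
  case (Suc m)
  then show ?thesis
    using subword_prods_alt_word[OF assms(1,2), of m] subword_prods_alt_word[OF assms(2,1), of m] assms(3)
    by auto
qed simp

text \<open>By induction on
  the length: two reduced words with different last letters a, b can both be rewritten,
  via the dihedral lemma, into z (...b a) and z (...a b), which have the same subword
  products.\<close>
lemma subword_prods_reduced_eq:
  assumes "set w \<subseteq> D" "set w' \<subseteq> D" "length w = len (wprod G w)"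
    and "length w' = length w" "wprod G w' = wprod G w"
  shows "subword_prods w = subword_prods w'"
  using assms
proof (induction "length w" arbitrary: w w' rule: less_induct)
  case less
  have same_last: "subword_prods (u @ [c]) = subword_prods (u' @ [c])"
    if u: "set u \<subseteq> D" "set u' \<subseteq> D" "c \<in> D" "length u' = length u"
      and eq: "wprod G (u' @ [c]) = wprod G (u @ [c])"
      and red: "length (u @ [c]) = len (wprod G (u @ [c]))" "length (u @ [c]) = length w"
    for u u' c
  proof -
    have "wprod G u' \<otimes> c = wprod G u \<otimes> c"
      using eq u by (simp add: wprod_appendD)
    then have "wprod G u' = wprod G u"
      using u by simp
    moreover have "length u = len (wprod G u)"
      using reduced_butlast[OF u(1,3) red(1)] .
    ultimately have "subword_prods u = subword_prods u'"
      using less.hyps[of u u'] u red(2) by simp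
    then show ?thesis
      using subword_prods_snoc u D_sub by auto
  qed
  show ?case
  proof (cases w rule: rev_cases)
    case Nil
    then show ?thesis
      using less.prems by simp
  next
    case (snoc u a)
    obtain u' b where w': "w' = u' @ [b]"
      using less.prems(4) snoc by (cases w' rule: rev_cases) auto
    have D: "set u \<subseteq> D" "a \<in> D" "set u' \<subseteq> D" "b \<in> D"
      using less.prems snoc w' by auto
    show ?thesis
    proof (cases "a = b")
      case True
      then show ?thesis
        using same_last[of u u' a] less.prems snoc w' D by simp
    next
      case False
      let ?g = "wprod G w"
      have gc: "?g \<in> carrier G"
        using less.prems by simp
      have "?g \<otimes> a = wprod G u"
        using snoc D D_inv by (simp add: wprod_appendD m_assoc)
      moreover have "?g \<otimes> b = wprod G u'"
        using less.prems(5)[symmetric] w' D D_inv by (simp add: wprod_appendD m_assoc)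
      ultimately have descents: "len (?g \<otimes> a) < len ?g" "len (?g \<otimes> b) < len ?g"
        using len_word[of u] len_word[of u'] less.prems snoc w' D by auto
      obtain z n where zn: "set z \<subseteq> D" "n \<ge> 1" "length z + n = len ?g"
        "wprod G (z @ alt_word n a b) = ?g" "wprod G (z @ alt_word n b a) = ?g"
        using two_descents_alternating[OF gc D(2,4) False descents] by blast
      obtain m where m: "n = Suc m"
        using zn(2) by (cases n) auto
      have zD: "set (z @ alt_word m b a) \<subseteq> D" "set (z @ alt_word m a b) \<subseteq> D"
        using zn(1) alt_word_D D by auto
      have "subword_prods w = subword_prods (z @ alt_word n a b)"
        using same_last[OF D(1) zD(1) D(2)] snoc m zn less.prems by simp
      moreover have "subword_prods w' = subword_prods (z @ alt_word n b a)"
        using same_last[OF D(3) zD(2) D(4)] w' m zn less.prems by simp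
      moreover have "wprod G z \<otimes> wprod G (alt_word n a b) = wprod G z \<otimes> wprod G (alt_word n b a)"
        using zn alt_word_D D by (simp add: wprod_appendD)
      then have "wprod G (alt_word n a b) = wprod G (alt_word n b a)"
        using zn(1) alt_word_D D by simp
      then have "subword_prods (alt_word n a b) = subword_prods (alt_word n b a)"
        by (rule subword_prods_alt_word_sym[OF D(2,4)])
      ultimately show ?thesis
        using subword_prods_append zn(1) alt_word_D D D_sub by (metis subset_trans)
    qed
  qed
qed

text \<open>If every s in X is a right descent of u, then W_X is finite: it is contained in the
  subword products of a reduced word for u, which are stable under right multiplication
  by each such s.\<close>
lemma finite_W_if_all_descents:
  assumes X: "X \<subseteq> D" and u: "u \<in> carrier G" and desc: "\<forall>s\<in>X. len (u \<otimes> s) < len u"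
  shows "finite (W X)"
proof -
  obtain w where w: "set w \<subseteq> D" "wprod G w = u" "length w = len u"
    using reduced_word_exists u by blast
  have stable: "g \<otimes> s \<in> subword_prods w" if g: "g \<in> subword_prods w" and s: "s \<in> X" for g s
  proof -
    have sD: "s \<in> D"
      using s X by auto
    obtain r where r: "set r \<subseteq> D" "wprod G r = u \<otimes> s" "length r = len (u \<otimes> s)"
      using reduced_word_exists[of "u \<otimes> s"] u sD by auto
    have "len (u \<otimes> s) + 1 = len u"
      using len_mult_gen_cases[OF u sD] desc s by auto
    moreover have "wprod G (r @ [s]) = u"
      using r sD u D_inv by (simp add: wprod_appendD m_assoc)
    ultimately have "subword_prods w = subword_prods (r @ [s])"
      using subword_prods_reduced_eq[OF w(1), of "r @ [s]"] w r sD by simp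
    also have "\<dots> = subword_prods r \<union> (\<lambda>x. x \<otimes> s) ` subword_prods r"
      using subword_prods_snoc r sD D_sub by auto
    finally have S: "subword_prods w = subword_prods r \<union> (\<lambda>x. x \<otimes> s) ` subword_prods r" .
    have "x \<otimes> s \<otimes> s = x" if "x \<in> subword_prods r" for x
    proof -
      have "x \<in> carrier G"
        using that subword_prods_closed[of r] r(1) D_sub by blast
      then show ?thesis
        using sD D_inv by (simp add: m_assoc)
    qed
    then show ?thesis
      using g S by auto
  qed
  have "wprod G ws \<in> subword_prods w" if "set ws \<subseteq> X" for ws
    using that
  proof (induction ws rule: rev_induct)
    case (snoc s ws)
    then have "set ws \<subseteq> D" "s \<in> D"
      using X by auto
    then have "wprod G (ws @ [s]) = wprod G ws \<otimes> s"
      by (simp add: wprod_appendD)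
    then show ?case
      using snoc stable by auto
  qed (simp add: one_subword_prods)
  then have "W X \<subseteq> subword_prods w"
    by (auto simp: W_iff)
  then show ?thesis
    using finite_subword_prods finite_subset by blast
qed

end

section \<open>Poincare series: factorization and the Steinberg relation\<close>

lemma sum_eps_Pow: "finite B \<Longrightarrow> B \<noteq> {} \<Longrightarrow> (\<Sum>Y\<in>Pow B. eps Y) = 0"
  using prod_diff_conv_sum[of B "\<lambda>_. 1::rat" "\<lambda>_. 1"]
  by (simp add: eps_def power_0_left card_eq_0_iff)

context coxeter
begin

definition layer :: "'g set \<Rightarrow> nat \<Rightarrow> 'g set" where
  "layer X n = {g \<in> W X. len g = n}"

lemma poincare_fps_nth: "fps_nth (poincare_fps G D X) n = of_nat (card (layer X n))"
  by (simp add: poincare_fps_def layer_def)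

lemma finite_layer:
  assumes X: "X \<subseteq> D" "finite X"
  shows "finite (layer X n)"
proof -
  have "layer X n \<subseteq> wprod G ` {ws. set ws \<subseteq> X \<and> length ws = n}"
    using W_reduced_word[OF X(1)] by (force simp: layer_def)
  then show ?thesis
    by (rule finite_subset) (intro finite_imageI finite_lists_length_eq X(2))
qed

lemma layer_zero: "X \<subseteq> D \<Longrightarrow> layer X 0 = {\<one>}"
  using W_one len_zero W_carrier by (auto simp: layer_def)

definition coset_reps :: "'g set \<Rightarrow> 'g set \<Rightarrow> 'g set" where
  "coset_reps X Y = {z \<in> W X. \<forall>s\<in>Y. len z < len (z \<otimes> s)}"

definition coset_series :: "'g set \<Rightarrow> 'g set \<Rightarrow> rat fps" where
  "coset_series X Y = Abs_fps (\<lambda>n. of_nat (card {z \<in> coset_reps X Y. len z = n}))"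

lemma coset_reps_iff:
  "X \<subseteq> D \<Longrightarrow> Y \<subseteq> D \<Longrightarrow> z \<in> coset_reps X Y \<longleftrightarrow> z \<in> W X \<and> coset_minimal Y z"
  using coset_minimal_iff W_carrier by (auto simp: coset_reps_def)

lemma layer_bij:
  assumes X: "X \<subseteq> D" and Y: "Y \<subseteq> X"
  shows "bij_betw (\<lambda>(z, v). z \<otimes> v)
    (\<Union>i\<in>{0..n}. {z \<in> coset_reps X Y. len z = i} \<times> layer Y (n - i)) (layer X n)"
    (is "bij_betw ?m ?P _")
proof -
  have YD: "Y \<subseteq> D"
    using X Y by auto
  have rep: "z \<in> W X" "coset_minimal Y z" if "z \<in> coset_reps X Y" for z
    using that coset_reps_iff[OF X YD] by auto
  have "inj_on ?m ?P"
  proof (rule inj_onI)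
    fix p q assume P: "p \<in> ?P" "q \<in> ?P" and eq: "?m p = ?m q"
    obtain z1 v1 z2 v2 where pq: "p = (z1, v1)" "q = (z2, v2)"
      by (cases p, cases q)
    from P pq have "z1 \<in> coset_reps X Y" "z2 \<in> coset_reps X Y" "v1 \<in> W Y" "v2 \<in> W Y"
      by (auto simp: layer_def)
    then show "p = q"
      using coset_decomposition_unique[OF YD, of z1 z2 v1 v2] rep eq pq by auto
  qed
  moreover have "?m ` ?P \<subseteq> layer X n"
  proof
    fix g assume "g \<in> ?m ` ?P"
    then obtain z v where "z \<in> coset_reps X Y" "v \<in> W Y" "len z + len v = n" "g = z \<otimes> v"
      by (force simp: layer_def)
    then show "g \<in> layer X n"
      using coset_minimal_len_add[OF YD] rep W_mult[OF X] W_mono[OF Y]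
      by (auto simp: layer_def)
  qed
  moreover have "layer X n \<subseteq> ?m ` ?P"
  proof
    fix g assume g: "g \<in> layer X n"
    then have gX: "g \<in> W X"
      by (simp add: layer_def)
    obtain z v where zv: "v \<in> W Y" "coset_minimal Y z" "g = z \<otimes> v"
      using coset_decomposition[OF YD W_carrier[OF X gX]] by blast
    have "z = g \<otimes> inv v"
      using zv W_carrier[OF YD] by (simp add: coset_minimal_def m_assoc)
    moreover have "inv v \<in> W X"
      using W_inv[OF X] W_mono[OF Y] zv(1) by blast
    ultimately have "z \<in> coset_reps X Y"
      using zv(2) coset_reps_iff[OF X YD] W_mult[OF X gX] by simp
    moreover have "len g = len z + len v"
      using coset_minimal_len_add[OF YD zv(2,1)] zv(3) by simp
    ultimately have "(z, v) \<in> ?P"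
      using g zv by (auto simp: layer_def)
    then show "g \<in> ?m ` ?P"
      using zv(3) by force
  qed
  ultimately show ?thesis
    unfolding bij_betw_def by blast
qed

lemma poincare_fps_factor:
  assumes X: "X \<subseteq> D" "finite X" and Y: "Y \<subseteq> X"
  shows "coset_series X Y * poincare_fps G D Y = poincare_fps G D X"
proof (rule fps_ext)
  fix n
  define M where "M i = {z \<in> coset_reps X Y. len z = i}" for i
  have YD: "Y \<subseteq> D" "finite Y"
    using X Y finite_subset by auto
  have "finite (M i)" for i
    using finite_layer[OF X, of i] by (rule finite_subset[rotated]) (auto simp: M_def coset_reps_def layer_def)
  then have "card (layer X n) = (\<Sum>i = 0..n. card (M i \<times> layer Y (n - i)))"
    using bij_betw_same_card[OF layer_bij[OF X(1) Y, of n]] finite_layer[OF YD]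
    by (simp add: card_UN_disjoint M_def disjoint_iff)
  then show "fps_nth (coset_series X Y * poincare_fps G D Y) n = fps_nth (poincare_fps G D X) n"
    by (simp add: fps_mult_nth coset_series_def poincare_fps_nth M_def card_cartesian_product
        flip: of_nat_sum of_nat_mult)
qed

definition descents :: "'g set \<Rightarrow> 'g \<Rightarrow> 'g set" where
  "descents X z = {s \<in> X. len (z \<otimes> s) < len z}"

lemma coset_reps_layer:
  assumes X: "X \<subseteq> D" and Y: "Y \<subseteq> X"
  shows "{z \<in> coset_reps X Y. len z = n} = {z \<in> layer X n. Y \<inter> descents X z = {}}"
proof -
  have "len z < len (z \<otimes> s) \<longleftrightarrow> \<not> len (z \<otimes> s) < len z" if "z \<in> W X" "s \<in> Y" for z s
    using len_mult_gen_cases[of z s] W_carrier[OF X] that X Y by auto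
  then show ?thesis
    using Y by (auto simp: coset_reps_def layer_def descents_def)
qed

text \<open>Each z in W_X is counted with weight the alternating sum
  over the subsets of X - descents X z, which is nonempty since W_X is infinite.\<close>
lemma steinberg:
  assumes X: "X \<subseteq> D" "finite X" and inf: "infinite (W X)"
  shows "(\<Sum>Y\<in>Pow X. fps_const (eps Y) * coset_series X Y) = 0"
proof (rule fps_ext)
  fix n
  have count: "(of_nat (card {z \<in> coset_reps X Y. len z = n}) :: rat)
      = (\<Sum>z\<in>layer X n. if Y \<inter> descents X z = {} then 1 else 0)" if "Y \<in> Pow X" for Y
    using coset_reps_layer[OF X(1), of Y n] that finite_layer[OF X]
    by (simp add: sum.If_cases Int_def)
  have vanish: "(\<Sum>Y\<in>Pow X. if Y \<inter> descents X z = {} then eps Y else 0) = 0"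
    if z: "z \<in> layer X n" for z
  proof -
    have "X - descents X z \<noteq> {}"
      using finite_W_if_all_descents[OF X(1) W_carrier[OF X(1)]] z inf
      by (auto simp: layer_def descents_def)
    moreover have "Pow X \<inter> {Y. Y \<inter> descents X z = {}} = Pow (X - descents X z)"
      by auto
    ultimately show ?thesis
      using sum_eps_Pow[of "X - descents X z"] X(2) by (simp add: sum.If_cases)
  qed
  have "fps_nth (\<Sum>Y\<in>Pow X. fps_const (eps Y) * coset_series X Y) n
      = (\<Sum>Y\<in>Pow X. \<Sum>z\<in>layer X n. if Y \<inter> descents X z = {} then eps Y else 0)"
    using count by (simp add: fps_sum_nth coset_series_def sum_distrib_left if_distrib cong: if_cong)
  also have "\<dots> = 0"
    using vanish by (subst sum.swap) simp
  finally show "fps_nth (\<Sum>Y\<in>Pow X. fps_const (eps Y) * coset_series X Y) n = fps_nth 0 n"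
    by simp
qed

text \<open>Dividing Steinberg's relation by W_X(t): the alternating sum of 1/W_Y(t) over Y
  contained in X vanishes.\<close>
lemma sum_eps_inverse_poincare:
  assumes X: "X \<subseteq> D" "finite X" and inf: "infinite (W X)"
  shows "(\<Sum>Y\<in>Pow X. fps_const (eps Y) * inverse (poincare_fps G D Y)) = 0"
proof -
  let ?F = "poincare_fps G D"
  have "?F X * inverse (?F Y) = coset_series X Y" if "Y \<in> Pow X" for Y
  proof -
    have "?F Y * inverse (?F Y) = 1"
      using layer_zero[of Y] that X by (simp add: poincare_fps_nth inverse_mult_eq_1')
    then show ?thesis
      using poincare_fps_factor[OF X, of Y] that by (metis PowD mult.assoc mult.right_neutral)
  qed
  then have "?F X * (\<Sum>Y\<in>Pow X. fps_const (eps Y) * inverse (?F Y))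
      = (\<Sum>Y\<in>Pow X. fps_const (eps Y) * coset_series X Y)"
    by (simp add: sum_distrib_left mult.left_commute)
  also have "\<dots> = 0"
    using steinberg[OF X inf] .
  moreover have "?F X \<noteq> 0"
    using layer_zero[OF X(1)] fps_nonzeroI[of "?F X" 0] by (simp add: poincare_fps_nth)
  ultimately show ?thesis
    by simp
qed

end

section \<open>Reduced denominators\<close>

lemma monic_normalize: "lead_coeff (q :: rat poly) = 1 \<Longrightarrow> normalize q = q"
  by (simp add: normalize_poly_def one_pCons[symmetric])

lemma coprime_smult_smult:
  assumes "coprime (a :: rat poly) b" "u \<noteq> 0"
  shows "coprime (smult u a) (smult u b)"
proof (rule coprimeI)
  fix e assume "e dvd smult u a" "e dvd smult u b"
  then have "e dvd a" "e dvd b"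
    using dvd_smult_cancel assms(2) by blast+
  then show "is_unit e"
    using coprime_common_divisor assms(1) by blast
qed

text \<open>A monic q with p F = c q for some p coprime to q is the reduced denominator of c/F:
  two such representations p/q, p'/q' give p q' = p' q, so q and q' divide each other.\<close>
lemma reduced_denom_eqI:
  fixes F :: "rat fps"
  assumes F: "F \<noteq> 0" and q: "lead_coeff q = 1" "coprime p q"
    and pq: "fps_of_poly p * F = fps_const c * fps_of_poly q"
  shows "reduced_denom c F = q"
  unfolding reduced_denom_def
proof (rule the_equality)
  show "lead_coeff q = 1 \<and> (\<exists>p. coprime p q \<and> fps_of_poly p * F = fps_const c * fps_of_poly q)"
    using q pq by blast
next
  fix q1 assume "lead_coeff q1 = 1 \<and> (\<exists>p. coprime p q1 \<and> fps_of_poly p * F = fps_const c * fps_of_poly q1)"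
  then obtain p1 where q1: "lead_coeff q1 = 1" "coprime p1 q1"
    and p1: "fps_of_poly p1 * F = fps_const c * fps_of_poly q1"
    by blast
  have "fps_of_poly (p1 * q) * F = fps_of_poly q * (fps_of_poly p1 * F)"
    by (simp add: fps_of_poly_mult ac_simps)
  also have "\<dots> = fps_const c * (fps_of_poly q * fps_of_poly q1)"
    using p1 by (simp add: ac_simps)
  also have "\<dots> = fps_of_poly q1 * (fps_of_poly p * F)"
    using pq by (simp add: ac_simps)
  also have "\<dots> = fps_of_poly (p * q1) * F"
    by (simp add: fps_of_poly_mult ac_simps)
  finally have cross: "p1 * q = p * q1"
    using F by simp
  have "q1 dvd q"
    using cross q1(2) by (metis coprime_commute coprime_dvd_mult_right_iff dvd_triv_right)
  moreover have "q dvd q1"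
    using cross q(2) by (metis coprime_commute coprime_dvd_mult_right_iff dvd_triv_right)
  ultimately show "q1 = q"
    using associated_eqI monic_normalize q1(1) q(1) by metis
qed

text \<open>If F has nonzero constant term and V/F is a polynomial, then the reduced
  denominator of c/F (c nonzero) divides V: cancel the gcd of c V/F and V, and normalize.\<close>
lemma reduced_denom_dvd:
  fixes F :: "rat fps" and V p :: "rat poly"
  assumes F0: "fps_nth F 0 \<noteq> 0" and V: "V \<noteq> 0" and c: "c \<noteq> 0"
    and pF: "fps_of_poly p * F = fps_of_poly V"
  shows "reduced_denom c F dvd V"
    and "\<exists>p'. fps_of_poly p' * F = fps_const c * fps_of_poly (reduced_denom c F)"
proof -
  have F: "F \<noteq> 0"
    using F0 by auto
  define a where "a = smult c p"
  define d where "d = gcd a V"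
  define a' where "a' = a div d"
  define b' where "b' = V div d"
  have ad: "a = a' * d" "V = b' * d"
    by (simp_all add: a'_def b'_def d_def)
  have b'0: "b' \<noteq> 0"
    using V ad by auto
  have "fps_of_poly a * F = fps_const c * fps_of_poly V"
    using pF by (simp add: a_def fps_of_poly_smult mult.assoc)
  then have "(fps_of_poly a' * F) * fps_of_poly d = (fps_const c * fps_of_poly b') * fps_of_poly d"
    using ad by (simp add: fps_of_poly_mult ac_simps)
  moreover have "d \<noteq> 0"
    using V by (simp add: d_def)
  ultimately have a'F: "fps_of_poly a' * F = fps_const c * fps_of_poly b'"
    by simp
  define u where "u = inverse (lead_coeff b')"
  have u0: "u \<noteq> 0"
    using b'0 by (simp add: u_def)
  have "coprime a' b'"
    using div_gcd_coprime[of a V] V by (simp add: a'_def b'_def d_def)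
  then have cop: "coprime (smult u a') (smult u b')"
    using u0 by (rule coprime_smult_smult)
  have "lead_coeff (smult u b') = 1"
    using b'0 by (simp add: u_def lead_coeff_smult)
  moreover note cop
  moreover have p'F: "fps_of_poly (smult u a') * F = fps_const c * fps_of_poly (smult u b')"
    using a'F by (simp add: fps_of_poly_smult ac_simps)
  ultimately have rd: "reduced_denom c F = smult u b'"
    by (rule reduced_denom_eqI[OF F])
  show "reduced_denom c F dvd V"
    using ad u0 by (simp add: rd smult_dvd_iff)
  show "\<exists>p'. fps_of_poly p' * F = fps_const c * fps_of_poly (reduced_denom c F)"
    using p'F unfolding rd by blast
qed

section \<open>Virg(D) and the denominators of the Poincare series\<close>

context coxeter
begin

lemma poincare_fps_nth_zero: "X \<subseteq> D \<Longrightarrow> fps_nth (poincare_fps G D X) 0 = 1"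
  by (simp add: poincare_fps_nth layer_zero)

lemma poincare_fps_inverse: "X \<subseteq> D \<Longrightarrow> poincare_fps G D X * inverse (poincare_fps G D X) = 1"
  by (simp add: poincare_fps_nth_zero inverse_mult_eq_1')

lemma poincare_fps_finite:
  assumes fin: "finite (W X)"
  shows "poincare_fps G D X = fps_of_poly (poincare_poly G D X)"
proof (rule fps_ext)
  fix n
  have "coeff (poincare_poly G D X) n = (\<Sum>g\<in>W X. if len g = n then 1 else 0)"
    by (simp add: poincare_poly_def coeff_sum coeff_monom)
  also have "\<dots> = of_nat (card (layer X n))"
    using fin by (simp add: sum.If_cases layer_def Int_def)
  finally show "fps_nth (poincare_fps G D X) n = fps_nth (fps_of_poly (poincare_poly G D X)) n"
    by (simp add: poincare_fps_nth)
qed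

text \<open>For finite W_X this holds
  by definition of Virg(D); for infinite W_X, Steinberg's relation expresses eps(X)/W_X(t)
  through the 1/W_Y(t) with Y strictly contained in X, so induction on |X| applies.\<close>
lemma Virg_over_poincare:
  assumes finD: "finite D" and XD: "X \<subset> D"
  shows "\<exists>p. fps_of_poly p * poincare_fps G D X = fps_of_poly (Virg G D)"
  using XD
proof (induction "card X" arbitrary: X rule: less_induct)
  case less
  let ?F = "poincare_fps G D" and ?V = "fps_of_poly (Virg G D)"
  have X: "X \<subseteq> D" "finite X"
    using less.prems finD finite_subset by auto
  show ?case
  proof (cases "finite (W X)")
    case True
    have "poincare_poly G D X dvd Virg G D"
      unfolding Virg_def by (rule dvd_Lcm) (use less.prems True in blast)
    then obtain q where "Virg G D = poincare_poly G D X * q"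
      by (elim dvdE)
    then show ?thesis
      using poincare_fps_finite[OF True] by (intro exI[of _ q]) (simp add: fps_of_poly_mult)
  next
    case False
    define S where "S = Pow X - {X}"
    have "\<exists>p. ?V * inverse (?F Y) = fps_of_poly p" if "Y \<in> S" for Y
    proof -
      have "card Y < card X" "Y \<subset> D"
        using that X less.prems psubset_card_mono by (auto simp: S_def)
      then obtain p where "fps_of_poly p * ?F Y = ?V"
        using less.hyps by blast
      then have "?V * inverse (?F Y) = fps_of_poly p * (?F Y * inverse (?F Y))"
        by (simp add: mult.assoc)
      moreover have "Y \<subseteq> D"
        using that X by (auto simp: S_def)
      ultimately show ?thesis
        using poincare_fps_inverse by auto
    qed
    then obtain pf where pf: "\<And>Y. Y \<in> S \<Longrightarrow> ?V * inverse (?F Y) = fps_of_poly (pf Y)"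
      by metis
    define q where "q = (\<Sum>Y\<in>S. smult (eps Y) (pf Y))"
    let ?f = "\<lambda>Y. fps_const (eps Y) * inverse (?F Y)"
    have "?f X + (\<Sum>Y\<in>S. ?f Y) = 0"
      using sum_eps_inverse_poincare[OF X False] sum.remove[of "Pow X" X ?f] X
      by (simp add: S_def)
    then have "fps_const (eps X) * inverse (?F X) = - (\<Sum>Y\<in>S. fps_const (eps Y) * inverse (?F Y))"
      by (simp add: eq_neg_iff_add_eq_0)
    then have "fps_const (eps X) * (?V * inverse (?F X))
        = ?V * - (\<Sum>Y\<in>S. fps_const (eps Y) * inverse (?F Y))"
      by (metis mult.left_commute)
    also have "\<dots> = - (\<Sum>Y\<in>S. fps_const (eps Y) * (?V * inverse (?F Y)))"
      by (simp add: sum_distrib_left mult.left_commute)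
    also have "\<dots> = - fps_of_poly q"
      using pf by (simp add: q_def fps_of_poly_sum fps_of_poly_smult)
    finally have "fps_const (eps X) * (fps_const (eps X) * (?V * inverse (?F X)))
        = fps_of_poly (smult (- eps X) q)"
      by (simp add: fps_of_poly_smult)
    moreover have "fps_const (eps X) * fps_const (eps X) = 1"
      by (simp add: eps_def flip: fps_const_mult power_mult_distrib)
    ultimately have "?V * inverse (?F X) = fps_of_poly (smult (- eps X) q)"
      by (metis mult.assoc mult_1)
    then have "fps_of_poly (smult (- eps X) q) * ?F X = ?V * (inverse (?F X) * ?F X)"
      by (simp add: mult.assoc)
    also have "inverse (?F X) * ?F X = 1"
      using poincare_fps_inverse[OF X(1)] by (simp add: mult.commute)
    finally show ?thesis
      by auto
  qed
qed

lemma Virg_nonzero: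
  assumes finD: "finite D"
  shows "Virg G D \<noteq> 0"
proof -
  have "finite {poincare_poly G D X | X. X \<subset> D \<and> finite (W X)}"
    using finD by (rule finite_subset[rotated, OF finite_imageI[OF finite_Pow_iff[THEN iffD2]]]) auto
  moreover have "poincare_poly G D X \<noteq> 0" if "X \<subseteq> D" "finite (W X)" for X
    using poincare_fps_finite[OF that(2)] poincare_fps_nth_zero[OF that(1)] by auto
  ultimately show ?thesis
    unfolding Virg_def by (auto simp: Lcm_0_iff)
qed

lemma reduced_denom_dvd_Virg:
  assumes "finite D" "X \<subset> D"
  shows "reduced_denom (eps X) (poincare_fps G D X) dvd Virg G D"
  using Virg_over_poincare[OF assms] reduced_denom_dvd(1) Virg_nonzero[OF assms(1)]
    poincare_fps_nth_zero[of X] assms(2) by (auto simp: eps_def)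

text \<open>... and for finite W_X it is W_X(t) itself up to a unit, so it is divisible by W_X(t).\<close>
lemma poincare_poly_dvd_reduced_denom:
  assumes X: "X \<subseteq> D" and fin: "finite (W X)"
  shows "poincare_poly G D X dvd reduced_denom (eps X) (poincare_fps G D X)"
proof -
  let ?P = "poincare_poly G D X" and ?q = "reduced_denom (eps X) (poincare_fps G D X)"
  have F: "poincare_fps G D X = fps_of_poly ?P"
    using poincare_fps_finite[OF fin] .
  have "?P \<noteq> 0"
    using F poincare_fps_nth_zero[OF X] by auto
  then obtain p where "fps_of_poly p * fps_of_poly ?P = fps_const (eps X) * fps_of_poly ?q"
    using reduced_denom_dvd(2)[of "poincare_fps G D X" ?P "eps X" 1] F poincare_fps_nth_zero[OF X]
    by (auto simp: eps_def)
  then have "p * ?P = smult (eps X) ?q"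
    by (simp flip: fps_of_poly_mult fps_of_poly_smult)
  then have "?P dvd smult (eps X) ?q"
    by (metis dvd_triv_right)
  then show ?thesis
    by (simp add: eps_def dvd_smult_cancel)
qed

lemma Lcm_reduced_denoms_dvd_Virg:
  assumes "finite D"
  shows "Lcm {reduced_denom (eps X) (poincare_fps G D X) | X. X \<subset> D} dvd Virg G D"
  using reduced_denom_dvd_Virg[OF assms] by (auto intro: Lcm_least)

lemma Virg_dvd_Lcm_reduced_denoms:
  "Virg G D dvd Lcm {reduced_denom (eps X) (poincare_fps G D X) | X. X \<subset> D}"
  unfolding Virg_def
proof (rule Lcm_least)
  fix P assume "P \<in> {poincare_poly G D X | X. X \<subset> D \<and> finite (W X)}"
  then obtain X where X: "P = poincare_poly G D X" "X \<subset> D" "finite (W X)"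
    by blast
  then have "reduced_denom (eps X) (poincare_fps G D X)
      dvd Lcm {reduced_denom (eps X) (poincare_fps G D X) | X. X \<subset> D}"
    by (intro dvd_Lcm) blast
  then show "P dvd Lcm {reduced_denom (eps X) (poincare_fps G D X) | X. X \<subset> D}"
    using poincare_poly_dvd_reduced_denom[of X] X by (auto intro: dvd_trans)
qed

end

text \<open>The main theorem: both sides are normalized and divide each other.\<close>
theorem mainTheorem5:
  fixes G :: "('g, 'b) monoid_scheme" and D :: "'g set"
  assumes "coxeter_system G D"
    and "finite D"
    and "infinite (carrier G)"
  shows "Lcm {reduced_denom (eps X) (poincare_fps G D X) | X. X \<subset> D} = Virg G D"
proof -
  interpret coxeter G D
    using assms(1) by (rule coxeter_systemD)
  have "normalize (Virg G D) = Virg G D"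
    unfolding Virg_def by simp
  then show ?thesis
    using associated_eqI[OF Lcm_reduced_denoms_dvd_Virg[OF assms(2)] Virg_dvd_Lcm_reduced_denoms]
      normalize_Lcm by blast
qed

end
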